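(* Let $G$ be a non-complete double-critical $k$-chromatic graph. Then $G$ does not contain the complete graph $K_{k-1}$ as a subgraph.
   Context: All graphs are finite and simple. A graph $G$ is (vertex-)critical if $\chi(G-v)<\chi(G)$ for every vertex $v\in V(G)$. A critical graph $G$ is double-critical if $\chi(G-x-y)\le\chi(G)-2$ for every edge $xy\in E(G)$. *)

theory Defs
  imports Main
begin

definition graph :: "'a set \<Rightarrow> 'a set set \<Rightarrow> bool" where
  "graph V E \<longleftrightarrow> finite V \<and> (\<forall>e\<in>E. \<exists>u v. u \<in> V \<and> v \<in> V \<and> u \<noteq> v \<and> e = {u, v})"

definition colorable :: "'a set \<Rightarrow> 'a set set \<Rightarrow> nat \<Rightarrow> bool" where
  "colorable V E k \<longleftrightarrow> (\<exists>f :: 'a \<Rightarrow> nat. f ` V \<subseteq> {..<k} \<and>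
      (\<forall>u\<in>V. \<forall>v\<in>V. {u, v} \<in> E \<longrightarrow> f u \<noteq> f v))"

definition chi :: "'a set \<Rightarrow> 'a set set \<Rightarrow> nat" where
  "chi V E = (LEAST k. colorable V E k)"

definition del_edges :: "'a set set \<Rightarrow> 'a set \<Rightarrow> 'a set set" where
  "del_edges E S = {e \<in> E. e \<inter> S = {}}"

definition vertex_critical :: "'a set \<Rightarrow> 'a set set \<Rightarrow> bool" where
  "vertex_critical V E \<longleftrightarrow>
     (\<forall>v\<in>V. chi (V - {v}) (del_edges E {v}) < chi V E)"

definition double_critical :: "'a set \<Rightarrow> 'a set set \<Rightarrow> bool" where
  "double_critical V E \<longleftrightarrow> vertex_critical V E \<and>
     (\<forall>x y. {x, y} \<in> E \<longrightarrow> chi (V - {x, y}) (del_edges E {x, y}) + 2 \<le> chi V E)"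

definition complete_graph :: "'a set \<Rightarrow> 'a set set \<Rightarrow> bool" where
  "complete_graph V E \<longleftrightarrow> (\<forall>u\<in>V. \<forall>v\<in>V. u \<noteq> v \<longrightarrow> {u, v} \<in> E)"

definition contains_clique :: "'a set \<Rightarrow> 'a set set \<Rightarrow> nat \<Rightarrow> bool" where
  "contains_clique V E n \<longleftrightarrow> (\<exists>S \<subseteq> V. card S = n \<and>
     (\<forall>u\<in>S. \<forall>v\<in>S. u \<noteq> v \<longrightarrow> {u, v} \<in> E))"

end

theory Submission
  imports Defs
begin

text \<open>
  Let \<open>S\<close> be a clique on \<open>k - 1\<close> vertices. No vertex outside \<open>S\<close> is adjacent to all of \<open>S\<close>:
  otherwise there is a \<open>K\<^sub>k\<close>, and a \<open>k\<close>-chromatic vertex-critical graph containing \<open>K\<^sub>k\<close> is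
  \<open>K\<^sub>k\<close> itself. No edge \<open>xy\<close> lies outside \<open>S\<close> either, since \<open>G - x - y\<close> still contains
  \<open>S\<close> and so has chromatic number at least \<open>k - 1\<close>. Hence every vertex outside \<open>S\<close> can take
  the colour of one of its non-neighbours in \<open>S\<close>, which colours \<open>G\<close> with \<open>k - 1\<close> colours.
\<close>

definition clique :: "'a set set \<Rightarrow> 'a set \<Rightarrow> bool" where
  "clique E S \<longleftrightarrow> (\<forall>u\<in>S. \<forall>v\<in>S. u \<noteq> v \<longrightarrow> {u, v} \<in> E)"

lemma graph_del_edges: "graph V E \<Longrightarrow> graph (V - X) (del_edges E X)"
  unfolding graph_def del_edges_def by fastforce

lemma graph_edge_neq:
  assumes "graph V E" "{u, v} \<in> E"
  shows "u \<noteq> v"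
  using assms unfolding graph_def by (metis doubleton_eq_iff insert_absorb2 insert_iff)

lemma colorable_if_edge_separating_map:
  assumes "finite S" "r ` V \<subseteq> S"
    and "\<And>u v. u \<in> V \<Longrightarrow> v \<in> V \<Longrightarrow> {u, v} \<in> E \<Longrightarrow> r u \<noteq> r v"
  shows "colorable V E (card S)"
proof -
  obtain g where g: "bij_betw g S {0..<card S}"
    using ex_bij_betw_finite_nat[OF \<open>finite S\<close>] by blast
  show ?thesis
    unfolding colorable_def
  proof (intro exI conjI ballI impI)
    show "(g \<circ> r) ` V \<subseteq> {..<card S}"
      using g assms(2) by (fastforce simp: bij_betw_def)
  next
    fix u v assume "u \<in> V" "v \<in> V" "{u, v} \<in> E"
    then have "r u \<noteq> r v" "r u \<in> S" "r v \<in> S"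
      using assms(2,3) by auto
    with g show "(g \<circ> r) u \<noteq> (g \<circ> r) v"
      by (auto simp: bij_betw_def inj_on_def)
  qed
qed

lemma colorable_card:
  assumes "graph V E"
  shows "colorable V E (card V)"
  using colorable_if_edge_separating_map[of V id V E] graph_edge_neq[OF assms] assms
  by (simp add: graph_def)

lemma colorable_chi: "graph V E \<Longrightarrow> colorable V E (chi V E)"
  unfolding chi_def by (rule LeastI, rule colorable_card)

lemma chi_le: "colorable V E m \<Longrightarrow> chi V E \<le> m"
  unfolding chi_def by (rule Least_le)

lemma chi_eq_0_iff: "graph V E \<Longrightarrow> chi V E = 0 \<longleftrightarrow> V = {}"
  using colorable_chi[of V E] chi_le[of "{}" E 0]
  by (auto simp: colorable_def chi_def)

lemma card_clique_le_chi:
  assumes "graph V E" "S \<subseteq> V" "clique E S"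
  shows "card S \<le> chi V E"
proof -
  obtain f where f: "f ` V \<subseteq> {..<chi V E}" "\<forall>u\<in>V. \<forall>v\<in>V. {u, v} \<in> E \<longrightarrow> f u \<noteq> f v"
    using colorable_chi[OF assms(1)] unfolding colorable_def by blast
  have "inj_on f S"
    using f(2) assms(2,3) unfolding inj_on_def clique_def by blast
  moreover have "f ` S \<subseteq> {..<chi V E}"
    using f(1) assms(2) by blast
  ultimately show ?thesis
    using card_inj_on_le[of f S "{..<chi V E}"] by simp
qed

lemma clique_del_edges:
  "clique E S \<Longrightarrow> S \<inter> X = {} \<Longrightarrow> clique (del_edges E X) S"
  unfolding clique_def del_edges_def by blast

lemma vertex_critical_chromatic_clique_eq:
  assumes "graph V E" "vertex_critical V E"
    and "K \<subseteq> V" "clique E K" "card K = chi V E"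
  shows "K = V"
proof (rule ccontr)
  assume "K \<noteq> V"
  with \<open>K \<subseteq> V\<close> obtain v where v: "v \<in> V" "v \<notin> K" by blast
  have "card K \<le> chi (V - {v}) (del_edges E {v})"
    using v assms(3,4)
    by (intro card_clique_le_chi graph_del_edges assms(1) clique_del_edges) auto
  with assms(2,5) v show False
    unfolding vertex_critical_def by fastforce
qed

lemma vertex_critical_nonneighbour_in_clique:
  assumes "graph V E" "vertex_critical V E" "\<not> complete_graph V E"
    and "S \<subseteq> V" "clique E S" "card S + 1 = chi V E" "t \<in> V - S"
  shows "\<exists>s\<in>S. {t, s} \<notin> E"
proof (rule ccontr)
  assume "\<not> ?thesis"
  then have clique: "clique E (insert t S)"
    using assms(5) by (auto simp: clique_def insert_commute)
  moreover have "card (insert t S) = chi V E"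
    using assms(1,4,6,7) finite_subset[of S V] unfolding graph_def by simp
  ultimately have "insert t S = V"
    using vertex_critical_chromatic_clique_eq[OF assms(1,2)] assms(4,7) by blast
  with clique assms(3) show False
    unfolding clique_def complete_graph_def by simp
qed

lemma double_critical_no_edge_off_large_clique:
  assumes "graph V E" "double_critical V E"
    and "S \<subseteq> V" "clique E S" "chi V E \<le> card S + 1"
    and "x \<in> V - S" "y \<in> V - S"
  shows "{x, y} \<notin> E"
proof
  assume "{x, y} \<in> E"
  have "card S \<le> chi (V - {x, y}) (del_edges E {x, y})"
    using assms(3,4,6,7)
    by (intro card_clique_le_chi graph_del_edges assms(1) clique_del_edges) auto
  with \<open>{x, y} \<in> E\<close> assms(2,5) show False
    unfolding double_critical_def by fastforce
qed

lemma colorable_card_if_independent_complement: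
  assumes "graph V E" "S \<subseteq> V"
    and nonadj: "\<forall>t\<in>V - S. \<exists>s\<in>S. {t, s} \<notin> E"
    and indep: "\<And>x y. x \<in> V - S \<Longrightarrow> y \<in> V - S \<Longrightarrow> {x, y} \<notin> E"
  shows "colorable V E (card S)"
proof -
  obtain h where h: "\<forall>t\<in>V - S. h t \<in> S \<and> {t, h t} \<notin> E"
    using nonadj by metis
  let ?r = "\<lambda>u. if u \<in> S then u else h u"
  show ?thesis
  proof (rule colorable_if_edge_separating_map)
    show "finite S"
      using assms(1,2) finite_subset unfolding graph_def by blast
    show "?r ` V \<subseteq> S"
      using h by auto
  next
    fix u v assume "u \<in> V" "v \<in> V" "{u, v} \<in> E"
    moreover have "u \<noteq> v"
      using graph_edge_neq[OF assms(1) \<open>{u, v} \<in> E\<close>] .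
    ultimately show "?r u \<noteq> ?r v"
      using h indep[of u v] by (auto simp: insert_commute)
  qed
qed

theorem proposition2:
  fixes V :: "'a set" and E :: "'a set set" and k :: nat
  assumes "graph V E"
    and "double_critical V E"
    and "chi V E = k"
    and "\<not> complete_graph V E"
  shows "\<not> contains_clique V E (k - 1)"
proof
  assume "contains_clique V E (k - 1)"
  then obtain S where S: "S \<subseteq> V" "card S = k - 1" "clique E S"
    unfolding contains_clique_def clique_def by blast
  have "V \<noteq> {}"
    using assms(4) unfolding complete_graph_def by blast
  then have "k \<noteq> 0"
    using chi_eq_0_iff[OF assms(1)] assms(3) by simp
  have "\<exists>s\<in>S. {t, s} \<notin> E" if "t \<in> V - S" for t
    using vertex_critical_nonneighbour_in_clique[OF assms(1) _ assms(4) S(1,3) _ that]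
      assms(2,3) S(2) \<open>k \<noteq> 0\<close> unfolding double_critical_def by simp
  moreover have "\<And>x y. x \<in> V - S \<Longrightarrow> y \<in> V - S \<Longrightarrow> {x, y} \<notin> E"
    using double_critical_no_edge_off_large_clique[OF assms(1,2) S(1,3)] S(2) assms(3) by simp
  ultimately have "colorable V E (k - 1)"
    using colorable_card_if_independent_complement[OF assms(1) S(1)] S(2) by simp
  then show False
    using chi_le assms(3) \<open>k \<noteq> 0\<close> by fastforce
qed

end
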